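(* For every $t\ge0$, $(r^+,r^-)\in\mathcal S^2$, $D\ge1$, $\mathrm{sgn}\in\{+,-\}^D$ and every $\boldsymbol\tau'=(\tau_1',\dots,\tau_D')\in\partial\triangle_T^{(D)}$, the limit $$\lim_{(\tau_1,\dots,\tau_D)\to(\tau_1',\dots,\tau_D'),\ (\tau_1,\dots,\tau_D)\in\triangle_T^{(D)}}A^{D,\mathrm{sgn}}_{(r^+,r^-)}(t,[\tau_1,\dots,\tau_D])$$ exists; consequently $A^{D,\mathrm{sgn}}_{(r^+,r^-)}(t,[\tau_1',\dots,\tau_D'])$ can be defined as this limit.
   Context: Let $\mathcal S=\{-1,+1\}$, $\{|-1\rangle,|+1\rangle\}$ an orthonormal basis of $\mathbb C^2$, $H_0$ a Hermitian operator on $\mathbb C^2$, $\rho_s(0)$ a $2\times2$ complex matrix, and $T>0$. Let $\tilde\eta(\tau)=\frac1\pi\int_0^\infty J(\omega)(\coth(\beta\omega/2)\cos\omega\tau-i\sin\omega\tau)d\omega$ with $\beta>0$, $J(\omega)=\frac\pi2\sum_j\frac{c_j^2}{m_j\omega_j}\delta(\omega-\omega_j)$ ($\omega_j>0$); $\tilde\eta$ is continuous and $z^*$ is complex conjugation. For $a\in\mathcal S$ let $\hat a=-a$; for $r=(r^+,r^-)\in\mathcal S^2$ let $E(r)=\langle r^+|H_0|r^+\rangle-\langle r^-|H_0|r^-\rangle$. For $L>0$, $D\ge0$: $\triangle_L^{(D)}=\{(\tau_1,\dots,\tau_D):\tau_k>0,\sum\tau_k<L\}$ (a single point if $D=0$,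 integration over it meaning evaluation). Path segments: given $r_0\in\mathcal S^2$, $D\ge0$, $\mathrm{sgn}\in\{+,-\}^D$, define $r_1,\dots,r_D$ by: $r_j$ is $r_{j-1}$ with its $+$ component flipped ($a\mapsto\hat a$) if $\mathrm{sgn}_j=+$, or its $-$ component flipped if $\mathrm{sgn}_j=-$. For $\boldsymbol\tau\in\triangle_L^{(D)}$ the path segment on $[0,L)$ equals $r_d$ on $[\sum_{k\le d}\tau_k,\sum_{k\le d+1}\tau_k)$ ($0\le d<D$) and $r_D$ on $[\sum_{k\le D}\tau_k,L)$. Its flip factors are $V_j=-i\langle r_j^+|H_0|r_{j-1}^+\rangle$ if $\mathrm{sgn}_j=+$ and $V_j=i\langle r_{j-1}^-|H_0|r_j^-\rangle$ if $\mathrm{sgn}_j=-$; its piece lengths are $\ell_0=\tau_1$, $\ell_j=\tau_{j+1}$ ($1\le j<D$), $\ell_D=L-\sum\tau_k$ ($\ell_0=L$ if $D=0$). For $t\ge0$ let $h=(h^+,h^-)$ be the path segment on $[0,T)$ with data $(r_0,D,\mathrm{sgn},\boldsymbol\tau)$ and $Y(h)=\prod_{j=0}^De^{-iE(r_j)\ell_j}\prod_{j=1}^DV_j$. For $\tilde D\ge0$, $\tilde r_0\in\mathcal S^2$, $\widetilde{\mathrm{sgn}}\in\{+,-\}^{\tilde D}$, $\tilde{\boldsymbol\tau}\in\triangle_t^{(\tilde D)}$, let $g=(g^+,g^-)$ be the path segment on $[0,t)$ with these data (states $\tilde r_j$, flip factors $\tilde V_j$, lengths $\tilde\ell_j$)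 and $X(g)=\langle\tilde r_0^+|\rho_s(0)|\tilde r_0^-\rangle\prod_{j=0}^{\tilde D}e^{-iE(\tilde r_j)\tilde\ell_j}\prod_{j=1}^{\tilde D}\tilde V_j$. Let $Z(g,h)=-\int_0^tdx_1\int_{\max(0,x_1-T)}^{x_1}dx_2\,(g^+(x_1)-g^-(x_1))(g^+(x_2)\tilde\eta(x_1-x_2)-g^-(x_2)\tilde\eta^*(x_1-x_2))-\int_t^{t+T}dx_1\int_{\max(0,x_1-T)}^{t}dx_2\,(h^+(x_1-t)-h^-(x_1-t))(g^+(x_2)\tilde\eta(x_1-x_2)-g^-(x_2)\tilde\eta^*(x_1-x_2))-\int_0^Tdx_1\int_0^{x_1}dx_2\,(h^+(x_1)-h^-(x_1))(h^+(x_2)\tilde\eta(x_1-x_2)-h^-(x_2)\tilde\eta^*(x_1-x_2))$. Then for $\boldsymbol\tau\in\triangle_T^{(D)}$: $A^{D,\mathrm{sgn}}_{r_0}(t,[\tau_1,\dots,\tau_D]):=\sum_{\tilde D=0}^\infty\sum_{\tilde r_0\in\mathcal S^2}\sum_{\widetilde{\mathrm{sgn}}\in\{+,-\}^{\tilde D}}\int_{\triangle_t^{(\tilde D)}}X(g)\,\mathbf 1[\tilde r_{\tilde D}=r_0]\,Y(h)\,e^{Z(g,h)}\,d\tilde{\boldsymbol\tau}$. *)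

theory Defs
  imports "HOL-Analysis.Analysis"
begin

text \<open>Spin values: the set S = {-1,+1}, represented inside int.
  Matrix elements of operators on C^2 in the basis |-1>,|+1> are given as
  functions int => int => complex (only arguments in S matter).\<close>

definition spins :: "int set" where
  "spins = {-1, 1}"

definition hermitian2 :: "(int \<Rightarrow> int \<Rightarrow> complex) \<Rightarrow> bool" where
  "hermitian2 H \<longleftrightarrow> (\<forall>a\<in>spins. \<forall>b\<in>spins. H a b = cnj (H b a))"

text \<open>The bath correlation function eta-tilde for the discrete spectral density
  J(w) = pi/2 * sum_j c_j^2/(m_j w_j) delta(w - w_j); (1/pi) int J(w)(...) dw
  unfolds to (1/2) sum_j c_j^2/(m_j w_j) (coth(beta w_j/2) cos(w_j tau) - i sin(w_j tau)).\<close>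

definition eta_term :: "real \<Rightarrow> ('j \<Rightarrow> real) \<Rightarrow> ('j \<Rightarrow> real) \<Rightarrow> ('j \<Rightarrow> real) \<Rightarrow> real \<Rightarrow> 'j \<Rightarrow> complex" where
  "eta_term \<beta> c m \<omega> \<tau> j =
     complex_of_real (c j ^ 2 / (m j * \<omega> j)) *
     (complex_of_real (cosh (\<beta> * \<omega> j / 2) / sinh (\<beta> * \<omega> j / 2) * cos (\<omega> j * \<tau>))
      - \<i> * complex_of_real (sin (\<omega> j * \<tau>)))"

definition eta_tilde :: "real \<Rightarrow> ('j \<Rightarrow> real) \<Rightarrow> ('j \<Rightarrow> real) \<Rightarrow> ('j \<Rightarrow> real) \<Rightarrow> real \<Rightarrow> complex" where
  "eta_tilde \<beta> c m \<omega> \<tau> = (1/2) * infsum (eta_term \<beta> c m \<omega> \<tau>) UNIV"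

text \<open>Flipping: True means sgn = +, flip the + component; False means sgn = -.\<close>

definition flip :: "bool \<Rightarrow> int \<times> int \<Rightarrow> int \<times> int" where
  "flip s r = (if s then (- fst r, snd r) else (fst r, - snd r))"

text \<open>State r_j (j = 0..D) of a path segment with initial state r0 and signs sg
  (list of length D; entry j-1 of the list is sgn_j).\<close>

definition pstate :: "int \<times> int \<Rightarrow> bool list \<Rightarrow> nat \<Rightarrow> int \<times> int" where
  "pstate r0 sg j = fold flip (take j sg) r0"

text \<open>Times are 0-based: tau k (k < D) is tau_{k+1} of the paper.
  The open simplex triangle_L^(D); for D = 0 it is the whole space (a single point
  after restricting to the relevant coordinates).\<close>

definition tsimplex :: "nat \<Rightarrow> real \<Rightarrow> (nat \<Rightarrow> real) set" where
  "tsimplex D L = {\<tau>. (\<forall>k<D. 0 < \<tau> k) \<and> (D = 0 \<or> (\<Sum>k<D. \<tau> k) < L)}"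

text \<open>The simplex as a subset of R^D, embedded into nat => real (coordinates >= D are 0).\<close>

definition tsimplexR :: "nat \<Rightarrow> real \<Rightarrow> (nat \<Rightarrow> real) set" where
  "tsimplexR D L = tsimplex D L \<inter> {\<tau>. \<forall>k\<ge>D. \<tau> k = 0}"

definition pathseg :: "int \<times> int \<Rightarrow> bool list \<Rightarrow> (nat \<Rightarrow> real) \<Rightarrow> real \<Rightarrow> int \<times> int" where
  "pathseg r0 sg \<tau> x = pstate r0 sg (card {k. k < length sg \<and> (\<Sum>i\<le>k. \<tau> i) \<le> x})"

definition energy :: "(int \<Rightarrow> int \<Rightarrow> complex) \<Rightarrow> int \<times> int \<Rightarrow> complex" where
  "energy H r = H (fst r) (fst r) - H (snd r) (snd r)"

definition flipfac :: "(int \<Rightarrow> int \<Rightarrow> complex) \<Rightarrow> int \<times> int \<Rightarrow> bool list \<Rightarrow> nat \<Rightarrow> complex" where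
  "flipfac H r0 sg j =
    (if sg ! (j - 1)
     then - \<i> * H (fst (pstate r0 sg j)) (fst (pstate r0 sg (j - 1)))
     else \<i> * H (snd (pstate r0 sg (j - 1))) (snd (pstate r0 sg j)))"

definition piecelen :: "bool list \<Rightarrow> (nat \<Rightarrow> real) \<Rightarrow> real \<Rightarrow> nat \<Rightarrow> real" where
  "piecelen sg \<tau> L j = (if j < length sg then \<tau> j else L - (\<Sum>k<length sg. \<tau> k))"

definition segweight :: "(int \<Rightarrow> int \<Rightarrow> complex) \<Rightarrow> int \<times> int \<Rightarrow> bool list \<Rightarrow> (nat \<Rightarrow> real) \<Rightarrow> real \<Rightarrow> complex" where
  "segweight H r0 sg \<tau> L =
     (\<Prod>j\<in>{0..length sg}. exp (- \<i> * energy H (pstate r0 sg j) * complex_of_real (piecelen sg \<tau> L j)))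
     * (\<Prod>j\<in>{1..length sg}. flipfac H r0 sg j)"

definition Yw :: "(int \<Rightarrow> int \<Rightarrow> complex) \<Rightarrow> int \<times> int \<Rightarrow> bool list \<Rightarrow> (nat \<Rightarrow> real) \<Rightarrow> real \<Rightarrow> complex" where
  "Yw H r0 sg \<tau> T = segweight H r0 sg \<tau> T"

definition Xw :: "(int \<Rightarrow> int \<Rightarrow> complex) \<Rightarrow> (int \<Rightarrow> int \<Rightarrow> complex) \<Rightarrow> int \<times> int \<Rightarrow> bool list \<Rightarrow> (nat \<Rightarrow> real) \<Rightarrow> real \<Rightarrow> complex" where
  "Xw H \<rho> r0 sg \<tau> t = \<rho> (fst r0) (snd r0) * segweight H r0 sg \<tau> t"

definition pp :: "int \<times> int \<Rightarrow> complex" where "pp r = of_int (fst r)"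
definition pm :: "int \<times> int \<Rightarrow> complex" where "pm r = of_int (snd r)"

definition Zphase :: "(real \<Rightarrow> complex) \<Rightarrow> real \<Rightarrow> real \<Rightarrow> (real \<Rightarrow> int \<times> int) \<Rightarrow> (real \<Rightarrow> int \<times> int) \<Rightarrow> complex" where
  "Zphase \<eta> T t g h =
   - (LINT x1:{0..t}|lborel. LINT x2:{max 0 (x1 - T)..x1}|lborel.
        (pp (g x1) - pm (g x1)) * (pp (g x2) * \<eta> (x1 - x2) - pm (g x2) * cnj (\<eta> (x1 - x2))))
   - (LINT x1:{t..t+T}|lborel. LINT x2:{max 0 (x1 - T)..t}|lborel.
        (pp (h (x1 - t)) - pm (h (x1 - t))) * (pp (g x2) * \<eta> (x1 - x2) - pm (g x2) * cnj (\<eta> (x1 - x2))))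
   - (LINT x1:{0..T}|lborel. LINT x2:{0..x1}|lborel.
        (pp (h x1) - pm (h x1)) * (pp (h x2) * \<eta> (x1 - x2) - pm (h x2) * cnj (\<eta> (x1 - x2))))"

text \<open>The quantity A^{D,sgn}_{r0}(t,[tau_1..tau_D]) (tau given 0-based, length of sg = D).\<close>

definition Aamp :: "(int \<Rightarrow> int \<Rightarrow> complex) \<Rightarrow> (int \<Rightarrow> int \<Rightarrow> complex) \<Rightarrow> (real \<Rightarrow> complex) \<Rightarrow> real
     \<Rightarrow> int \<times> int \<Rightarrow> bool list \<Rightarrow> real \<Rightarrow> (nat \<Rightarrow> real) \<Rightarrow> complex" where
  "Aamp H \<rho> \<eta> T r0 sg t \<tau> =
    (\<Sum>Dt. \<Sum>rt0\<in>spins \<times> spins. \<Sum>sgt\<in>{xs. length xs = Dt}.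
       LINT \<tau>t:tsimplex Dt t|PiM {..<Dt} (\<lambda>_. lborel).
         Xw H \<rho> rt0 sgt \<tau>t t * (if pstate rt0 sgt Dt = r0 then 1 else 0) * Yw H r0 sg \<tau> T
         * exp (Zphase \<eta> T t (pathseg rt0 sgt \<tau>t) (pathseg r0 sg \<tau>)))"

end

(*
  Write A as the series over the number D of flips of the earlier segment g.  Its D-th term
  is a finite sum of integrals over the time simplex of t, whose integrand depends on
  tau only through the weight Y (continuous in tau) and the later path h, which in turn
  changes only at the finitely many jump times.  If tau_n tends to tau, the integrands
  of the double integrals in Z therefore converge off a null set, and bounded convergence
  makes every term continuous in tau, at points of the boundary of the simplex as well.
  Since |Z| <= 12 E (t+T)^2 with E a bound of eta-tilde on [0,T], the segment weights
  are bounded by powers of the l1-norm of H, and the simplex has volume t^D/D!, the D-th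
  term is dominated by a multiple of (2 |H|_1 t)^D/D!.  Tannery's theorem then shows that
  A is continuous at every tau', so its limit along the open simplex is A(tau') itself.
*)
theory Submission
  imports Defs
begin

section \<open>Bounded convergence of set integrals\<close>

lemma set_integral_bounded_convergence:
  fixes s :: "nat \<Rightarrow> 'a \<Rightarrow> 'b::{banach, second_countable_topology}"
  assumes A: "A \<in> sets M" "emeasure M A < \<infinity>"
    and meas: "\<And>n. s n \<in> borel_measurable M" "f \<in> borel_measurable M"
    and bound: "\<And>n x. x \<in> A \<Longrightarrow> norm (s n x) \<le> B"
    and lim: "AE x in M. x \<in> A \<longrightarrow> (\<lambda>n. s n x) \<longlonglongrightarrow> f x"
  shows "(\<lambda>n. LINT x:A|M. s n x) \<longlonglongrightarrow> (LINT x:A|M. f x)"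
  unfolding set_lebesgue_integral_def
proof (rule integral_dominated_convergence[where w = "\<lambda>x. indicator A x * B"])
  show "(\<lambda>x. indicator A x *\<^sub>R f x) \<in> borel_measurable M"
    "(\<lambda>x. indicator A x *\<^sub>R s n x) \<in> borel_measurable M" for n
    using A meas by measurable
  show "integrable M (\<lambda>x. indicator A x * B)"
    using A by (intro integrableI_bounded_set[where A = A and B = "\<bar>B\<bar>"]) auto
  show "AE x in M. (\<lambda>n. indicator A x *\<^sub>R s n x) \<longlonglongrightarrow> indicator A x *\<^sub>R f x"
    using lim by eventually_elim (auto simp: indicator_def)
  show "AE x in M. norm (indicator A x *\<^sub>R s n x) \<le> indicator A x * B" for n
    by (intro AE_I2) (auto simp: indicator_def bound)
qed

lemma norm_set_integral_le_measure:
  fixes f :: "'a \<Rightarrow> 'b::{banach, second_countable_topology}"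
  assumes A: "A \<in> sets M" "emeasure M A < \<infinity>" and "B \<ge> 0"
    and bound: "\<And>x. x \<in> A \<Longrightarrow> norm (f x) \<le> B"
  shows "norm (LINT x:A|M. f x) \<le> B * measure M A"
proof (cases "set_integrable M A f")
  case True
  have "set_integrable M A (\<lambda>x. B)"
    unfolding set_integrable_def
    using A by (intro integrableI_bounded_set[where A = A and B = "\<bar>B\<bar>"]) auto
  then have "(LINT x:A|M. norm (f x)) \<le> (LINT x:A|M. B)"
    by (intro set_integral_mono set_integrable_norm True bound)
  with set_integral_norm_bound[OF True] show ?thesis
    using A by (simp add: set_integral_const mult.commute)
next
  case False
  then show ?thesis
    using \<open>B \<ge> 0\<close> by (simp add: set_lebesgue_integral_def set_integrable_def not_integrable_integral_eq)
qed

lemma set_integral_Int_space: "(LINT x:A|M. f x) = (LINT x:(A \<inter> space M)|M. f x)"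
  unfolding set_lebesgue_integral_def
  by (intro Bochner_Integration.integral_cong) (auto simp: indicator_def)

lemma norm_set_integral_Icc_le:
  fixes f :: "real \<Rightarrow> 'b::{banach, second_countable_topology}"
  assumes "c \<ge> 0" "K \<ge> 0" "b - a \<le> K" and "\<And>x. x \<in> {a..b} \<Longrightarrow> norm (f x) \<le> c"
  shows "norm (LINT x:{a..b}|lborel. f x) \<le> c * K"
proof -
  have "norm (LINT x:{a..b}|lborel. f x) \<le> c * measure lborel {a..b}"
    using assms by (intro norm_set_integral_le_measure) (auto simp: emeasure_lborel_Icc_eq)
  also have "\<dots> \<le> c * K"
    using assms by (cases "a \<le> b") (auto intro: mult_left_mono)
  finally show ?thesis .
qed

lemma norm_nested_set_integral_le:
  fixes F :: "real \<Rightarrow> real \<Rightarrow> 'b::{banach, second_countable_topology}"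
  assumes "c \<ge> 0" "K \<ge> 0" "L \<ge> 0" "b - a \<le> L"
    and "\<And>x1. x1 \<in> {a..b} \<Longrightarrow> hi x1 - lo x1 \<le> K"
    and "\<And>x1 x2. x1 \<in> {a..b} \<Longrightarrow> x2 \<in> {lo x1..hi x1} \<Longrightarrow> norm (F x1 x2) \<le> c"
  shows "norm (LINT x1:{a..b}|lborel. LINT x2:{lo x1..hi x1}|lborel. F x1 x2) \<le> c * K * L"
  using assms by (intro norm_set_integral_Icc_le) (auto intro: norm_set_integral_Icc_le)

lemma borel_measurable_set_integral_Icc:
  fixes F :: "real \<Rightarrow> real \<Rightarrow> 'b::{banach, second_countable_topology}"
  assumes "(\<lambda>z. F (fst z) (snd z)) \<in> borel_measurable (lborel \<Otimes>\<^sub>M lborel)"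
    and "lo \<in> borel_measurable lborel" "hi \<in> borel_measurable lborel"
  shows "(\<lambda>x. LINT y:{lo x..hi x}|lborel. F x y) \<in> borel_measurable lborel"
proof -
  have "(\<lambda>z. indicator {lo (fst z)..hi (fst z)} (snd z) *\<^sub>R F (fst z) (snd z))
      = (\<lambda>z. if lo (fst z) \<le> snd z \<and> snd z \<le> hi (fst z) then F (fst z) (snd z) else 0)"
    by (auto simp: indicator_def)
  also have "\<dots> \<in> borel_measurable (lborel \<Otimes>\<^sub>M lborel)"
    using assms by measurable
  finally show ?thesis
    unfolding set_lebesgue_integral_def
    by (intro lborel.borel_measurable_lebesgue_integral) (simp add: case_prod_beta')
qed

lemma nested_set_integral_bounded_convergence:
  fixes \<Phi> :: "nat \<Rightarrow> real \<Rightarrow> real \<Rightarrow> 'b::{banach, second_countable_topology}"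
  assumes meas: "\<And>n. (\<lambda>z. \<Phi> n (fst z) (snd z)) \<in> borel_measurable (lborel \<Otimes>\<^sub>M lborel)"
      "(\<lambda>z. \<Psi> (fst z) (snd z)) \<in> borel_measurable (lborel \<Otimes>\<^sub>M lborel)"
      "lo \<in> borel_measurable lborel" "hi \<in> borel_measurable lborel"
    and "c \<ge> 0" "K \<ge> 0"
    and "\<And>x1. x1 \<in> {a..b} \<Longrightarrow> hi x1 - lo x1 \<le> K"
    and bound: "\<And>n x1 x2. x1 \<in> {a..b} \<Longrightarrow> x2 \<in> {lo x1..hi x1} \<Longrightarrow> norm (\<Phi> n x1 x2) \<le> c"
    and "finite N"
    and lim: "\<And>x1 x2. x1 \<notin> N \<Longrightarrow> x2 \<notin> N \<Longrightarrow> eventually (\<lambda>n. \<Phi> n x1 x2 = \<Psi> x1 x2) sequentially"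
  shows "(\<lambda>n. LINT x1:{a..b}|lborel. LINT x2:{lo x1..hi x1}|lborel. \<Phi> n x1 x2)
           \<longlonglongrightarrow> (LINT x1:{a..b}|lborel. LINT x2:{lo x1..hi x1}|lborel. \<Psi> x1 x2)"
proof (rule set_integral_bounded_convergence[where B = "c * K"])
  have N_null: "AE x in lborel. x \<notin> N"
    using \<open>finite N\<close> by (intro AE_not_in finite_imp_null_set_lborel)
  show "(\<lambda>x1. LINT x2:{lo x1..hi x1}|lborel. \<Phi> n x1 x2) \<in> borel_measurable lborel" for n
    using meas by (intro borel_measurable_set_integral_Icc)
  show "(\<lambda>x1. LINT x2:{lo x1..hi x1}|lborel. \<Psi> x1 x2) \<in> borel_measurable lborel"
    using meas by (intro borel_measurable_set_integral_Icc)
  show "norm (LINT x2:{lo x1..hi x1}|lborel. \<Phi> n x1 x2) \<le> c * K" if "x1 \<in> {a..b}" for n x1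
    using assms that by (intro norm_set_integral_Icc_le) auto
  show "AE x1 in lborel. x1 \<in> {a..b} \<longrightarrow>
      (\<lambda>n. LINT x2:{lo x1..hi x1}|lborel. \<Phi> n x1 x2) \<longlonglongrightarrow> (LINT x2:{lo x1..hi x1}|lborel. \<Psi> x1 x2)"
    using N_null
  proof eventually_elim
    case (elim x1)
    show ?case
    proof (intro impI set_integral_bounded_convergence[where B = c])
      show "\<Phi> n x1 \<in> borel_measurable lborel" for n
        using measurable_Pair2[OF meas(1), of x1] by simp
      show "\<Psi> x1 \<in> borel_measurable lborel"
        using measurable_Pair2[OF meas(2), of x1] by simp
      show "AE x2 in lborel. x2 \<in> {lo x1..hi x1} \<longrightarrow> (\<lambda>n. \<Phi> n x1 x2) \<longlonglongrightarrow> \<Psi> x1 x2"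
        using N_null by eventually_elim (intro impI tendsto_eventually lim elim)
    qed (use bound in \<open>auto simp: emeasure_lborel_Icc_eq\<close>)
  qed
qed (auto simp: emeasure_lborel_Icc_eq)

lemma borel_measurable_cnj [measurable]:
  assumes "f \<in> borel_measurable M"
  shows "(\<lambda>x. cnj (f x :: complex)) \<in> borel_measurable M"
proof -
  have "cnj \<in> borel_measurable borel"
    by (intro borel_measurable_continuous_onI continuous_intros)
  from measurable_compose[OF assms this] show ?thesis
    by (simp add: o_def)
qed

lemma measurable_PiM_lborel_id:
  "(\<lambda>x. x) \<in> measurable (Pi\<^sub>M I (\<lambda>_. lborel)) (borel :: (nat \<Rightarrow> real) measure)"
proof (rule measurable_coordinatewise_then_product)
  fix i :: nat
  show "(\<lambda>x. x i) \<in> borel_measurable (Pi\<^sub>M I (\<lambda>_. lborel))"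
  proof (cases "i \<in> I")
    case True
    then show ?thesis
      using measurable_component_singleton[of i I "\<lambda>_. lborel"] by simp
  next
    case False
    then show ?thesis
      by (subst measurable_cong[where g = "\<lambda>_. undefined"])
        (auto simp: space_PiM PiE_def extensional_def)
  qed
qed

lemma tendsto_coordinate: "(u \<longlongrightarrow> \<tau>) F \<Longrightarrow> ((\<lambda>n. u n k) \<longlongrightarrow> \<tau> k) F"
  by (rule continuous_on_tendsto_compose[OF continuous_on_product_coordinates]) auto

lemma continuous_within_suminf:
  fixes a :: "nat \<Rightarrow> 'b::t2_space \<Rightarrow> 'a::{real_normed_algebra, banach}"
  assumes "\<And>k. continuous (at x within S) (a k)" "\<And>k y. norm (a k y) \<le> M k" "summable M"
  shows "continuous (at x within S) (\<lambda>y. \<Sum>k. a k y)"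
proof (cases "at x within S = bot")
  case False
  have "\<forall>\<^sub>F (k, y) in at_top \<times>\<^sub>F (at x within S). norm (a k y) \<le> M k"
    using assms(2) by (intro always_eventually) (simp add: case_prod_beta)
  with False assms(1,3) show ?thesis
    unfolding continuous_within using tannerys_theorem[of a "\<lambda>k. a k x"] by blast
qed (simp add: continuous_within)

section \<open>Spin paths and their weights\<close>

lemma flip_in_spins: "r \<in> spins \<times> spins \<Longrightarrow> flip s r \<in> spins \<times> spins"
  by (cases r) (auto simp: flip_def spins_def)

lemma fold_flip_in_spins: "r \<in> spins \<times> spins \<Longrightarrow> fold flip xs r \<in> spins \<times> spins"
  by (induction xs arbitrary: r) (simp_all add: flip_in_spins)

lemma pstate_in_spins: "r0 \<in> spins \<times> spins \<Longrightarrow> pstate r0 sg j \<in> spins \<times> spins"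
  by (simp add: pstate_def fold_flip_in_spins)

lemma pathseg_in_spins: "r0 \<in> spins \<times> spins \<Longrightarrow> pathseg r0 sg \<tau> x \<in> spins \<times> spins"
  by (simp add: pathseg_def pstate_in_spins)

definition matrix_l1 :: "(int \<Rightarrow> int \<Rightarrow> complex) \<Rightarrow> real" where
  "matrix_l1 M = (\<Sum>a\<in>spins. \<Sum>b\<in>spins. norm (M a b))"

lemma matrix_l1_nonneg: "matrix_l1 M \<ge> 0"
  unfolding matrix_l1_def by (intro sum_nonneg norm_ge_zero)

lemma norm_entry_le_matrix_l1:
  assumes "a \<in> spins" "b \<in> spins"
  shows "norm (M a b) \<le> matrix_l1 M"
proof -
  have "norm (M a b) \<le> (\<Sum>b\<in>spins. norm (M a b))"
    using assms by (intro member_le_sum) (auto simp: spins_def)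
  also have "\<dots> \<le> matrix_l1 M"
    unfolding matrix_l1_def using assms
    by (intro member_le_sum[where f = "\<lambda>a. \<Sum>b\<in>spins. norm (M a b)"] sum_nonneg)
       (auto simp: spins_def)
  finally show ?thesis .
qed

lemma norm_exp_energy:
  assumes "hermitian2 H" "r \<in> spins \<times> spins"
  shows "norm (exp (- \<i> * energy H r * complex_of_real l)) = 1"
proof -
  obtain a b where r: "r = (a, b)" "a \<in> spins" "b \<in> spins"
    using assms(2) by auto
  have "H a a = cnj (H a a)" "H b b = cnj (H b b)"
    using assms(1) r unfolding hermitian2_def by blast+
  then have "Im (H a a) = 0" "Im (H b b) = 0"
    by (metis Reals_cnj_iff complex_is_Real_iff)+
  then show ?thesis
    by (simp add: energy_def r)
qed

lemma norm_flipfac_le: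
  assumes "r0 \<in> spins \<times> spins"
  shows "norm (flipfac H r0 sg j) \<le> matrix_l1 H"
proof -
  have "fst (pstate r0 sg k) \<in> spins" "snd (pstate r0 sg k) \<in> spins" for k
    using pstate_in_spins[OF assms] by (auto simp: mem_Times_iff)
  then show ?thesis
    by (simp add: flipfac_def norm_mult norm_entry_le_matrix_l1)
qed

lemma norm_segweight_le:
  assumes "hermitian2 H" "r0 \<in> spins \<times> spins"
  shows "norm (segweight H r0 sg \<tau> L) \<le> matrix_l1 H ^ length sg"
proof -
  have "(\<Prod>j\<in>{0..length sg}.
      norm (exp (- \<i> * energy H (pstate r0 sg j) * complex_of_real (piecelen sg \<tau> L j)))) = 1"
    by (simp only: norm_exp_energy[OF assms(1) pstate_in_spins[OF assms(2)]] prod.neutral_const)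
  then have "norm (segweight H r0 sg \<tau> L) = (\<Prod>j\<in>{1..length sg}. norm (flipfac H r0 sg j))"
    by (simp only: segweight_def norm_mult prod_norm[symmetric])
  also have "\<dots> \<le> (\<Prod>j\<in>{1..length sg}. matrix_l1 H)"
    by (intro prod_mono conjI norm_ge_zero norm_flipfac_le assms(2))
  finally show ?thesis by simp
qed

lemma continuous_on_segweight: "continuous_on UNIV (\<lambda>\<tau>. segweight H r0 sg \<tau> L)"
proof -
  have "continuous_on UNIV (\<lambda>\<tau>. piecelen sg \<tau> L j)" for j
    by (cases "j < length sg") (auto simp: piecelen_def intro!: continuous_intros)
  then show ?thesis
    unfolding segweight_def by (intro continuous_intros)
qed

lemma measurable_pathseg:
  fixes G :: "'w \<Rightarrow> nat \<Rightarrow> real"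
  assumes G: "G \<in> borel_measurable M" and [measurable]: "X \<in> borel_measurable M"
  shows "(\<lambda>w. pathseg r0 sg (G w) (X w)) \<in> measurable M (count_space UNIV)"
proof -
  have [measurable]: "(\<lambda>w. G w i) \<in> borel_measurable M" for i
    using measurable_product_then_coordinatewise[OF G] .
  have "(\<lambda>w. card {k. k < length sg \<and> (\<Sum>i\<le>k. G w i) \<le> X w}) \<in> measurable M (count_space UNIV)"
  proof (rule measurable_card)
    show "{w \<in> space M. k \<in> {k. k < length sg \<and> (\<Sum>i\<le>k. G w i) \<le> X w}} \<in> sets M" for k
      by measurable
  qed
  then show ?thesis
    unfolding pathseg_def by simp
qed

lemma eventually_pathseg_eq:
  assumes "u \<longlonglongrightarrow> \<tau>" and "x \<notin> (\<lambda>k. \<Sum>i\<le>k. \<tau> i) ` {..<length sg}"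
  shows "eventually (\<lambda>n. pathseg r0 sg (u n) x = pathseg r0 sg \<tau> x) sequentially"
proof -
  have "eventually (\<lambda>n. ((\<Sum>i\<le>k. u n i) \<le> x) = ((\<Sum>i\<le>k. \<tau> i) \<le> x)) sequentially"
    if "k < length sg" for k
  proof -
    have lim: "(\<lambda>n. \<Sum>i\<le>k. u n i) \<longlonglongrightarrow> (\<Sum>i\<le>k. \<tau> i)"
      by (intro tendsto_sum tendsto_coordinate[OF assms(1)])
    have "(\<Sum>i\<le>k. \<tau> i) \<noteq> x"
      using assms(2) that by auto
    then consider "(\<Sum>i\<le>k. \<tau> i) < x" | "x < (\<Sum>i\<le>k. \<tau> i)"
      by linarith
    then show ?thesis
    proof cases
      case 1
      from order_tendstoD(2)[OF lim this] show ?thesis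
        by eventually_elim (use 1 in auto)
    next
      case 2
      from order_tendstoD(1)[OF lim this] show ?thesis
        by eventually_elim (use 2 in auto)
    qed
  qed
  then have "eventually (\<lambda>n. \<forall>k\<in>{..<length sg}.
      ((\<Sum>i\<le>k. u n i) \<le> x) = ((\<Sum>i\<le>k. \<tau> i) \<le> x)) sequentially"
    by (intro eventually_ball_finite) auto
  then show ?thesis
    unfolding pathseg_def
    by (rule eventually_mono) (auto intro!: arg_cong[where f = "pstate r0 sg"] arg_cong[where f = card])
qed

section \<open>The influence phase\<close>

definition influence_kernel :: "(real \<Rightarrow> complex) \<Rightarrow> int \<times> int \<Rightarrow> int \<times> int \<Rightarrow> real \<Rightarrow> complex" where
  "influence_kernel \<eta> r1 r2 s = (pp r1 - pm r1) * (pp r2 * \<eta> s - pm r2 * cnj (\<eta> s))"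

lemma Zphase_influence_kernel:
  "Zphase \<eta> T t g h =
     - (LINT x1:{0..t}|lborel. LINT x2:{max 0 (x1 - T)..x1}|lborel.
          influence_kernel \<eta> (g x1) (g x2) (x1 - x2))
     - (LINT x1:{t..t+T}|lborel. LINT x2:{max 0 (x1 - T)..t}|lborel.
          influence_kernel \<eta> (h (x1 - t)) (g x2) (x1 - x2))
     - (LINT x1:{0..T}|lborel. LINT x2:{0..x1}|lborel.
          influence_kernel \<eta> (h x1) (h x2) (x1 - x2))"
  by (simp add: Zphase_def influence_kernel_def)

lemma norm_influence_kernel_le:
  assumes "r1 \<in> spins \<times> spins" "r2 \<in> spins \<times> spins" "norm (\<eta> s) \<le> E"
  shows "norm (influence_kernel \<eta> r1 r2 s) \<le> 4 * E"
proof -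
  have unit: "norm (pp r) = 1" "norm (pm r) = 1" if "r \<in> spins \<times> spins" for r
    using that by (auto simp: pp_def pm_def spins_def)
  have "norm (pp r1 - pm r1) \<le> 2"
    using norm_triangle_ineq4[of "pp r1" "pm r1"] unit[OF assms(1)] by simp
  moreover have "norm (pp r2 * \<eta> s - pm r2 * cnj (\<eta> s)) \<le> 2 * E"
    using norm_triangle_ineq4[of "pp r2 * \<eta> s" "pm r2 * cnj (\<eta> s)"] unit[OF assms(2)] assms(3)
    by (simp add: norm_mult)
  ultimately show ?thesis
    unfolding influence_kernel_def norm_mult
    using mult_mono[of _ 2 _ "2 * E"] by fastforce
qed

lemma measurable_influence_kernel [measurable]:
  assumes "\<eta> \<in> borel_measurable borel"
    and "r1 \<in> measurable M (count_space UNIV)" "r2 \<in> measurable M (count_space UNIV)"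
    and "s \<in> borel_measurable M"
  shows "(\<lambda>z. influence_kernel \<eta> (r1 z) (r2 z) (s z)) \<in> borel_measurable M"
proof -
  have "(\<lambda>z. f (r z)) \<in> borel_measurable M"
    if "r \<in> measurable M (count_space UNIV)" for r and f :: "int \<times> int \<Rightarrow> complex"
    using measurable_compose[OF that, of f borel] by simp
  note [measurable] = this[OF assms(2), of pp] this[OF assms(2), of pm]
    this[OF assms(3), of pp] this[OF assms(3), of pm]
  show ?thesis
    unfolding influence_kernel_def using assms(1,4) by measurable
qed

lemma measurable_Zphase:
  fixes g h :: "'w \<times> real \<Rightarrow> int \<times> int"
  assumes [measurable]: "\<eta> \<in> borel_measurable borel"
    "g \<in> measurable (M \<Otimes>\<^sub>M lborel) (count_space UNIV)"
    "h \<in> measurable (M \<Otimes>\<^sub>M lborel) (count_space UNIV)"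
  shows "(\<lambda>w. Zphase \<eta> T t (\<lambda>x. g (w, x)) (\<lambda>x. h (w, x))) \<in> borel_measurable M"
proof -
  have Icc: "indicator {a..b} x = (if a \<le> x \<and> x \<le> b then 1 else 0)" for a b x :: real
    by (simp add: indicator_def)
  show ?thesis
    unfolding Zphase_influence_kernel set_lebesgue_integral_def Icc by measurable
qed

lemma norm_Zphase_le:
  assumes "\<And>s. s \<in> {0..T} \<Longrightarrow> norm (\<eta> s) \<le> E" and "E \<ge> 0" "T \<ge> 0" "t \<ge> 0"
    and "\<And>x. g x \<in> spins \<times> spins" "\<And>x. h x \<in> spins \<times> spins"
  shows "norm (Zphase \<eta> T t g h) \<le> 12 * E * (t + T)\<^sup>2"
proof -
  let ?bound = "4 * E * (t + T) * (t + T)"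
  have triangle: "norm (- a - b - c) \<le> norm a + norm b + norm c" for a b c :: complex
    using norm_triangle_ineq4[of "- a - b" c] norm_triangle_ineq4[of "- a" b] by simp
  have "norm (Zphase \<eta> T t g h) \<le> ?bound + ?bound + ?bound"
    unfolding Zphase_influence_kernel
  proof (intro order_trans[OF triangle] add_mono)
    show "norm (LINT x1:{0..t}|lborel. LINT x2:{max 0 (x1 - T)..x1}|lborel.
        influence_kernel \<eta> (g x1) (g x2) (x1 - x2)) \<le> ?bound"
      using assms by (intro norm_nested_set_integral_le) (auto intro!: norm_influence_kernel_le)
    show "norm (LINT x1:{t..t+T}|lborel. LINT x2:{max 0 (x1 - T)..t}|lborel.
        influence_kernel \<eta> (h (x1 - t)) (g x2) (x1 - x2)) \<le> ?bound"
      using assms by (intro norm_nested_set_integral_le) (auto intro!: norm_influence_kernel_le)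
    show "norm (LINT x1:{0..T}|lborel. LINT x2:{0..x1}|lborel.
        influence_kernel \<eta> (h x1) (h x2) (x1 - x2)) \<le> ?bound"
      using assms by (intro norm_nested_set_integral_le) (auto intro!: norm_influence_kernel_le)
  qed
  then show ?thesis
    by (simp add: power2_eq_square)
qed

lemma Zphase_tendsto:
  assumes \<eta>: "\<eta> \<in> borel_measurable borel" "\<And>s. s \<in> {0..T} \<Longrightarrow> norm (\<eta> s) \<le> E"
    and "E \<ge> 0" "T \<ge> 0" "t \<ge> 0"
    and "\<And>x. g x \<in> spins \<times> spins" "\<And>n x. h n x \<in> spins \<times> spins"
    and meas: "g \<in> measurable lborel (count_space UNIV)"
      "\<And>n. h n \<in> measurable lborel (count_space UNIV)" "h' \<in> measurable lborel (count_space UNIV)"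
    and "finite N"
    and lim: "\<And>x. x \<notin> N \<Longrightarrow> eventually (\<lambda>n. h n x = h' x) sequentially"
  shows "(\<lambda>n. Zphase \<eta> T t g (h n)) \<longlonglongrightarrow> Zphase \<eta> T t g h'"
proof -
  note [measurable] = \<eta>(1) meas
  have "(\<lambda>n. LINT x1:{t..t+T}|lborel. LINT x2:{max 0 (x1 - T)..t}|lborel.
        influence_kernel \<eta> (h n (x1 - t)) (g x2) (x1 - x2))
      \<longlonglongrightarrow> (LINT x1:{t..t+T}|lborel. LINT x2:{max 0 (x1 - T)..t}|lborel.
        influence_kernel \<eta> (h' (x1 - t)) (g x2) (x1 - x2))"
  proof (rule nested_set_integral_bounded_convergence[where c = "4 * E" and K = t
        and N = "N \<union> (\<lambda>y. y + t) ` N"])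
    show "eventually (\<lambda>n. influence_kernel \<eta> (h n (x1 - t)) (g x2) (x1 - x2)
        = influence_kernel \<eta> (h' (x1 - t)) (g x2) (x1 - x2)) sequentially"
      if "x1 \<notin> N \<union> (\<lambda>y. y + t) ` N" for x1 x2
    proof -
      have "x1 - t \<notin> N"
        using that by force
      from lim[OF this] show ?thesis
        by eventually_elim simp
    qed
  qed (use assms in \<open>auto intro!: norm_influence_kernel_le\<close>)
  moreover have "(\<lambda>n. LINT x1:{0..T}|lborel. LINT x2:{0..x1}|lborel.
        influence_kernel \<eta> (h n x1) (h n x2) (x1 - x2))
      \<longlonglongrightarrow> (LINT x1:{0..T}|lborel. LINT x2:{0..x1}|lborel.
        influence_kernel \<eta> (h' x1) (h' x2) (x1 - x2))"
  proof (rule nested_set_integral_bounded_convergence[where c = "4 * E" and K = T and N = N])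
    show "eventually (\<lambda>n. influence_kernel \<eta> (h n x1) (h n x2) (x1 - x2)
        = influence_kernel \<eta> (h' x1) (h' x2) (x1 - x2)) sequentially"
      if "x1 \<notin> N" "x2 \<notin> N" for x1 x2
      using lim[OF that(1)] lim[OF that(2)] by eventually_elim simp
  qed (use assms in \<open>auto intro!: norm_influence_kernel_le\<close>)
  ultimately show ?thesis
    unfolding Zphase_influence_kernel by (intro tendsto_diff tendsto_const)
qed

section \<open>Continuity of the amplitude\<close>

(* tsimplex D t constrains only the first D coordinates, whereas the points of the product
   space are undefined beyond them; only the trace of the simplex on that space is measurable. *)
lemma tsimplex_Int_space_in_sets:
  "tsimplex D t \<inter> space (Pi\<^sub>M {..<D} (\<lambda>_. lborel)) \<in> sets (Pi\<^sub>M {..<D} (\<lambda>_. lborel))"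
proof -
  have "tsimplex D t = {x \<in> space borel. (\<forall>k\<in>{..<D}. 0 < x k) \<and> (D = 0 \<or> (\<Sum>k<D. x k) < t)}"
    by (auto simp: tsimplex_def)
  also have "\<dots> \<in> sets (borel :: (nat \<Rightarrow> real) measure)"
    by measurable
  finally show ?thesis
    using measurable_sets[OF measurable_PiM_lborel_id] by (simp add: vimage_def Int_def)
qed

lemma emeasure_tsimplex_le:
  assumes "t \<ge> 0"
  shows "emeasure (Pi\<^sub>M {..<D} (\<lambda>_. lborel)) (tsimplex D t \<inter> space (Pi\<^sub>M {..<D} (\<lambda>_. lborel)))
    \<le> ennreal (t ^ D / fact D)"
proof -
  let ?M = "Pi\<^sub>M {..<D} (\<lambda>_. lborel)"
  have "emeasure ?M (tsimplex D t \<inter> space ?M)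
      \<le> emeasure ?M ({x. (\<forall>i\<in>{..<D}. 0 \<le> x i) \<and> sum x {..<D} \<le> t} \<inter> space ?M)"
    using assms emeasure_std_simplex_aux[of "{..<D}" t]
    by (intro emeasure_mono) (auto simp: tsimplex_def less_imp_le)
  also have "\<dots> = ennreal (t ^ D / fact D)"
    using emeasure_std_simplex_aux[of "{..<D}" t] assms by simp
  finally show ?thesis .
qed

lemma measure_tsimplex_le:
  "t \<ge> 0 \<Longrightarrow> measure (Pi\<^sub>M {..<D} (\<lambda>_. lborel)) (tsimplex D t \<inter> space (Pi\<^sub>M {..<D} (\<lambda>_. lborel)))
    \<le> t ^ D / fact D"
  using emeasure_tsimplex_le[of t D] by (simp add: measure_def enn2real_leI)

definition amp_integrand ::
  "(int \<Rightarrow> int \<Rightarrow> complex) \<Rightarrow> (int \<Rightarrow> int \<Rightarrow> complex) \<Rightarrow> (real \<Rightarrow> complex) \<Rightarrow> real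
    \<Rightarrow> int \<times> int \<Rightarrow> bool list \<Rightarrow> real \<Rightarrow> int \<times> int \<Rightarrow> bool list
    \<Rightarrow> (nat \<Rightarrow> real) \<Rightarrow> (nat \<Rightarrow> real) \<Rightarrow> complex" where
  "amp_integrand H \<rho> \<eta> T r0 sg t rt0 sgt \<tau> \<tau>t =
     Xw H \<rho> rt0 sgt \<tau>t t * (if pstate rt0 sgt (length sgt) = r0 then 1 else 0) * Yw H r0 sg \<tau> T
     * exp (Zphase \<eta> T t (pathseg rt0 sgt \<tau>t) (pathseg r0 sg \<tau>))"

definition amp_term ::
  "(int \<Rightarrow> int \<Rightarrow> complex) \<Rightarrow> (int \<Rightarrow> int \<Rightarrow> complex) \<Rightarrow> (real \<Rightarrow> complex) \<Rightarrow> real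
    \<Rightarrow> int \<times> int \<Rightarrow> bool list \<Rightarrow> real \<Rightarrow> nat \<Rightarrow> (nat \<Rightarrow> real) \<Rightarrow> complex" where
  "amp_term H \<rho> \<eta> T r0 sg t D \<tau> =
     (\<Sum>rt0\<in>spins \<times> spins. \<Sum>sgt\<in>{xs. length xs = D}.
        LINT \<tau>t:tsimplex D t|Pi\<^sub>M {..<D} (\<lambda>_. lborel). amp_integrand H \<rho> \<eta> T r0 sg t rt0 sgt \<tau> \<tau>t)"

lemma Aamp_eq_suminf_amp_term: "Aamp H \<rho> \<eta> T r0 sg t \<tau> = (\<Sum>D. amp_term H \<rho> \<eta> T r0 sg t D \<tau>)"
  unfolding Aamp_def amp_term_def amp_integrand_def
  by (intro suminf_cong sum.cong refl) auto

lemma measurable_amp_integrand: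
  assumes [measurable]: "\<eta> \<in> borel_measurable borel"
  shows "amp_integrand H \<rho> \<eta> T r0 sg t rt0 sgt \<tau> \<in> borel_measurable (Pi\<^sub>M I (\<lambda>_. lborel))"
proof -
  have [measurable]: "(\<lambda>z. pathseg rt0 sgt (fst z) (snd z))
      \<in> measurable ((borel :: (nat \<Rightarrow> real) measure) \<Otimes>\<^sub>M lborel) (count_space UNIV)"
    "(\<lambda>z. pathseg r0 sg \<tau> (snd z))
      \<in> measurable ((borel :: (nat \<Rightarrow> real) measure) \<Otimes>\<^sub>M lborel) (count_space UNIV)"
    by (intro measurable_pathseg; measurable)+
  have [measurable]: "(\<lambda>\<tau>t. Zphase \<eta> T t (pathseg rt0 sgt \<tau>t) (pathseg r0 sg \<tau>)) \<in> borel_measurable borel"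
    using measurable_Zphase[of \<eta> "\<lambda>z. pathseg rt0 sgt (fst z) (snd z)" borel
        "\<lambda>z. pathseg r0 sg \<tau> (snd z)" T t] by simp
  have "amp_integrand H \<rho> \<eta> T r0 sg t rt0 sgt \<tau> \<in> borel_measurable borel"
    unfolding amp_integrand_def Xw_def segweight_def piecelen_def by measurable
  from measurable_compose[OF measurable_PiM_lborel_id this] show ?thesis
    by simp
qed

lemma norm_amp_integrand_le:
  assumes "hermitian2 H" "\<And>s. s \<in> {0..T} \<Longrightarrow> norm (\<eta> s) \<le> E" "E \<ge> 0" "T \<ge> 0" "t \<ge> 0"
    and r0: "r0 \<in> spins \<times> spins" and rt0: "rt0 \<in> spins \<times> spins"
  shows "norm (amp_integrand H \<rho> \<eta> T r0 sg t rt0 sgt \<tau> \<tau>t)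
    \<le> matrix_l1 \<rho> * matrix_l1 H ^ length sgt * matrix_l1 H ^ length sg * exp (12 * E * (t + T)\<^sup>2)"
proof -
  have X: "norm (Xw H \<rho> rt0 sgt \<tau>t t) \<le> matrix_l1 \<rho> * matrix_l1 H ^ length sgt"
    unfolding Xw_def norm_mult using assms rt0
    by (intro mult_mono norm_segweight_le norm_entry_le_matrix_l1) (auto simp: matrix_l1_nonneg)
  have Y: "norm (Yw H r0 sg \<tau> T) \<le> matrix_l1 H ^ length sg"
    unfolding Yw_def using assms by (intro norm_segweight_le)
  have Z: "norm (exp (Zphase \<eta> T t (pathseg rt0 sgt \<tau>t) (pathseg r0 sg \<tau>))) \<le> exp (12 * E * (t + T)\<^sup>2)"
    using norm_Zphase_le[OF assms(2-5) pathseg_in_spins[OF rt0] pathseg_in_spins[OF r0]]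
    by (auto intro: order_trans[OF complex_Re_le_cmod])
  have "norm (amp_integrand H \<rho> \<eta> T r0 sg t rt0 sgt \<tau> \<tau>t)
      \<le> matrix_l1 \<rho> * matrix_l1 H ^ length sgt * 1 * matrix_l1 H ^ length sg * exp (12 * E * (t + T)\<^sup>2)"
    unfolding amp_integrand_def norm_mult
    by (intro mult_mono X Y Z) (auto simp: matrix_l1_nonneg)
  then show ?thesis
    by simp
qed

lemma amp_integrand_tendsto:
  assumes "\<eta> \<in> borel_measurable borel" "\<And>s. s \<in> {0..T} \<Longrightarrow> norm (\<eta> s) \<le> E"
    and "E \<ge> 0" "T \<ge> 0" "t \<ge> 0" "r0 \<in> spins \<times> spins" "rt0 \<in> spins \<times> spins"
    and u: "u \<longlonglongrightarrow> \<tau>"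
  shows "(\<lambda>n. amp_integrand H \<rho> \<eta> T r0 sg t rt0 sgt (u n) \<tau>t)
    \<longlonglongrightarrow> amp_integrand H \<rho> \<eta> T r0 sg t rt0 sgt \<tau> \<tau>t"
proof -
  have "(\<lambda>n. Yw H r0 sg (u n) T) \<longlonglongrightarrow> Yw H r0 sg \<tau> T"
    unfolding Yw_def by (rule continuous_on_tendsto_compose[OF continuous_on_segweight u]) auto
  moreover have "(\<lambda>n. Zphase \<eta> T t (pathseg rt0 sgt \<tau>t) (pathseg r0 sg (u n)))
      \<longlonglongrightarrow> Zphase \<eta> T t (pathseg rt0 sgt \<tau>t) (pathseg r0 sg \<tau>)"
  proof -
    have "pathseg r sgs v \<in> measurable lborel (count_space UNIV)" for r sgs v
      using measurable_pathseg[of "\<lambda>_. v" lborel "\<lambda>x. x" r sgs] by simp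
    then show ?thesis
      using assms pathseg_in_spins eventually_pathseg_eq
      by (intro Zphase_tendsto[where N = "(\<lambda>k. \<Sum>i\<le>k. \<tau> i) ` {..<length sg}"]) auto
  qed
  ultimately show ?thesis
    unfolding amp_integrand_def by (intro tendsto_intros)
qed

lemma isCont_amp_term:
  assumes "hermitian2 H"
    and "\<eta> \<in> borel_measurable borel" "\<And>s. s \<in> {0..T} \<Longrightarrow> norm (\<eta> s) \<le> E"
    and "E \<ge> 0" "T \<ge> 0" "t \<ge> 0" and "r0 \<in> spins \<times> spins"
  shows "isCont (amp_term H \<rho> \<eta> T r0 sg t D) \<tau>"
proof (rule continuous_at_sequentiallyI)
  let ?M = "Pi\<^sub>M {..<D} (\<lambda>_. lborel)"
  fix u assume u: "u \<longlonglongrightarrow> \<tau>"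
  have "(\<lambda>n. LINT \<tau>t:tsimplex D t|?M. amp_integrand H \<rho> \<eta> T r0 sg t rt0 sgt (u n) \<tau>t)
      \<longlonglongrightarrow> (LINT \<tau>t:tsimplex D t|?M. amp_integrand H \<rho> \<eta> T r0 sg t rt0 sgt \<tau> \<tau>t)"
    if "rt0 \<in> spins \<times> spins" for rt0 sgt
    unfolding set_integral_Int_space[where A = "tsimplex D t"]
  proof (rule set_integral_bounded_convergence)
    show "emeasure ?M (tsimplex D t \<inter> space ?M) < \<infinity>"
      using emeasure_tsimplex_le[OF \<open>t \<ge> 0\<close>, of D] by (simp add: order_le_less_trans)
    show "norm (amp_integrand H \<rho> \<eta> T r0 sg t rt0 sgt (u n) \<tau>t)
        \<le> matrix_l1 \<rho> * matrix_l1 H ^ length sgt * matrix_l1 H ^ length sg * exp (12 * E * (t + T)\<^sup>2)"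
      for n \<tau>t
      using assms that by (intro norm_amp_integrand_le)
    show "AE \<tau>t in ?M. \<tau>t \<in> tsimplex D t \<inter> space ?M \<longrightarrow>
        (\<lambda>n. amp_integrand H \<rho> \<eta> T r0 sg t rt0 sgt (u n) \<tau>t)
        \<longlonglongrightarrow> amp_integrand H \<rho> \<eta> T r0 sg t rt0 sgt \<tau> \<tau>t"
      using assms that u by (intro AE_I2 impI amp_integrand_tendsto)
  qed (use assms in \<open>auto intro: tsimplex_Int_space_in_sets measurable_amp_integrand\<close>)
  then show "(\<lambda>n. amp_term H \<rho> \<eta> T r0 sg t D (u n)) \<longlonglongrightarrow> amp_term H \<rho> \<eta> T r0 sg t D \<tau>"
    unfolding amp_term_def by (intro tendsto_sum)
qed

lemma norm_integral_amp_integrand_le: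
  assumes "hermitian2 H" "\<And>s. s \<in> {0..T} \<Longrightarrow> norm (\<eta> s) \<le> E" "E \<ge> 0" "T \<ge> 0" "t \<ge> 0"
    and "r0 \<in> spins \<times> spins" "rt0 \<in> spins \<times> spins" "length sgt = D"
  shows "norm (LINT \<tau>t:tsimplex D t|Pi\<^sub>M {..<D} (\<lambda>_. lborel). amp_integrand H \<rho> \<eta> T r0 sg t rt0 sgt \<tau> \<tau>t)
    \<le> matrix_l1 \<rho> * matrix_l1 H ^ length sg * exp (12 * E * (t + T)\<^sup>2) * matrix_l1 H ^ D * (t ^ D / fact D)"
proof -
  let ?M = "Pi\<^sub>M {..<D} (\<lambda>_. lborel)"
  let ?B = "matrix_l1 \<rho> * matrix_l1 H ^ length sg * exp (12 * E * (t + T)\<^sup>2) * matrix_l1 H ^ D"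
  have "norm (LINT \<tau>t:(tsimplex D t \<inter> space ?M)|?M. amp_integrand H \<rho> \<eta> T r0 sg t rt0 sgt \<tau> \<tau>t)
      \<le> ?B * measure ?M (tsimplex D t \<inter> space ?M)"
  proof (rule norm_set_integral_le_measure)
    show "emeasure ?M (tsimplex D t \<inter> space ?M) < \<infinity>"
      using emeasure_tsimplex_le[OF \<open>t \<ge> 0\<close>, of D] by (simp add: order_le_less_trans)
    show "norm (amp_integrand H \<rho> \<eta> T r0 sg t rt0 sgt \<tau> \<tau>t) \<le> ?B" for \<tau>t
    proof -
      have "norm (amp_integrand H \<rho> \<eta> T r0 sg t rt0 sgt \<tau> \<tau>t)
          \<le> matrix_l1 \<rho> * matrix_l1 H ^ length sgt * matrix_l1 H ^ length sg * exp (12 * E * (t + T)\<^sup>2)"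
        using assms by (intro norm_amp_integrand_le)
      with assms(8) show ?thesis
        by (simp add: mult_ac)
    qed
  qed (simp_all add: tsimplex_Int_space_in_sets matrix_l1_nonneg)
  also have "\<dots> \<le> ?B * (t ^ D / fact D)"
    using \<open>t \<ge> 0\<close> by (intro mult_left_mono measure_tsimplex_le) (simp_all add: matrix_l1_nonneg)
  finally show ?thesis
    by (simp only: set_integral_Int_space[where A = "tsimplex D t"])
qed

lemma norm_amp_term_le:
  assumes "hermitian2 H" "\<And>s. s \<in> {0..T} \<Longrightarrow> norm (\<eta> s) \<le> E" "E \<ge> 0" "T \<ge> 0" "t \<ge> 0"
    and "r0 \<in> spins \<times> spins"
  shows "norm (amp_term H \<rho> \<eta> T r0 sg t D \<tau>)
    \<le> 4 * (matrix_l1 \<rho> * matrix_l1 H ^ length sg * exp (12 * E * (t + T)\<^sup>2))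
        * (2 * matrix_l1 H * t) ^ D / fact D"
proof -
  let ?C = "matrix_l1 \<rho> * matrix_l1 H ^ length sg * exp (12 * E * (t + T)\<^sup>2)"
  have "norm (amp_term H \<rho> \<eta> T r0 sg t D \<tau>)
      \<le> (\<Sum>rt0\<in>spins \<times> spins. \<Sum>sgt\<in>{xs :: bool list. length xs = D}.
           ?C * matrix_l1 H ^ D * (t ^ D / fact D))"
    unfolding amp_term_def using assms
    by (intro sum_norm_le norm_integral_amp_integrand_le) auto
  also have "\<dots> = 4 * ?C * (2 * matrix_l1 H * t) ^ D / fact D"
    using card_lists_length_eq[of "UNIV :: bool set" D]
    by (simp add: spins_def card_cartesian_product power_mult_distrib)
  finally show ?thesis .
qed

lemma continuous_Aamp:
  assumes "hermitian2 H" "continuous_on UNIV \<eta>" "T \<ge> 0" "t \<ge> 0" "r0 \<in> spins \<times> spins"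
  shows "continuous (at \<tau> within S) (Aamp H \<rho> \<eta> T r0 sg t)"
proof -
  have "bounded (\<eta> ` {0..T})"
    using assms(2) by (intro compact_imp_bounded compact_continuous_image)
      (auto intro: continuous_on_subset)
  then obtain E where E: "E > 0" "\<And>s. s \<in> {0..T} \<Longrightarrow> norm (\<eta> s) \<le> E"
    unfolding bounded_pos by blast
  have \<eta>: "\<eta> \<in> borel_measurable borel"
    using assms(2) by (rule borel_measurable_continuous_onI)
  let ?C = "matrix_l1 \<rho> * matrix_l1 H ^ length sg * exp (12 * E * (t + T)\<^sup>2)"
  have "continuous (at \<tau> within S) (\<lambda>\<tau>. \<Sum>D. amp_term H \<rho> \<eta> T r0 sg t D \<tau>)"
  proof (rule continuous_within_suminf)
    show "continuous (at \<tau> within S) (amp_term H \<rho> \<eta> T r0 sg t D)" for D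
      using isCont_amp_term[OF assms(1) \<eta> E(2) less_imp_le[OF E(1)] assms(3-5)]
      by (rule continuous_at_imp_continuous_at_within)
    show "norm (amp_term H \<rho> \<eta> T r0 sg t D \<tau>') \<le> 4 * ?C * (2 * matrix_l1 H * t) ^ D / fact D" for D \<tau>'
      using norm_amp_term_le[OF assms(1) E(2) less_imp_le[OF E(1)] assms(3-5)] by simp
    show "summable (\<lambda>D. 4 * ?C * (2 * matrix_l1 H * t) ^ D / fact D)"
      using summable_mult[OF summable_exp_generic[of "2 * matrix_l1 H * t"], of "4 * ?C"]
      by (simp add: divide_inverse mult_ac)
  qed
  then show ?thesis
    by (simp add: Aamp_eq_suminf_amp_term[abs_def])
qed

theorem theorem3p6:
  fixes H \<rho> :: "int \<Rightarrow> int \<Rightarrow> complex"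
    and \<beta> T t :: real
    and c m \<omega> :: "'j \<Rightarrow> real"
    and r0 :: "int \<times> int" and sg :: "bool list" and \<tau>' :: "nat \<Rightarrow> real"
  assumes "hermitian2 H"
    and "T > 0" and "\<beta> > 0"
    and "\<forall>j. \<omega> j > 0"
    and "\<forall>\<tau>. eta_term \<beta> c m \<omega> \<tau> summable_on UNIV"
    and "continuous_on UNIV (eta_tilde \<beta> c m \<omega>)"
    and "t \<ge> 0"
    and "r0 \<in> spins \<times> spins"
    and "length sg \<ge> 1"
    and "\<tau>' \<in> closure (tsimplexR (length sg) T) - tsimplexR (length sg) T"
  shows "\<exists>l. ((\<lambda>\<tau>. Aamp H \<rho> (eta_tilde \<beta> c m \<omega>) T r0 sg t \<tau>) \<longlongrightarrow> l)
               (at \<tau>' within tsimplexR (length sg) T)"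
proof -
  have "continuous (at \<tau>' within tsimplexR (length sg) T) (Aamp H \<rho> (eta_tilde \<beta> c m \<omega>) T r0 sg t)"
    using assms by (intro continuous_Aamp) auto
  then show ?thesis
    unfolding continuous_within by blast
qed

end
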